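(* Let $Z\in\mathbb{R}^{p_1\times p_2}$ have independent entries $Z_{ij}\sim N(0,\sigma_i^2)$, where $\sigma_1,\dots,\sigma_{p_1}\ge 0$. Then there is a universal constant $c>0$ such that \[ \mathbb{E}\|ZZ^\top-\mathbb{E}ZZ^\top\|\ge c\left(\sum_{i}\sigma_i^2+\sqrt{p_2\sum_i\sigma_i^2}\cdot\max_i\sigma_i\right). \]
   Context: $\|\cdot\|$ is the spectral norm. *)

theory Defs
  imports "HOL-Probability.Probability"
begin

definition gauss :: "real \<Rightarrow> real measure" where
  "gauss s = (if s = 0 then return lborel 0 else density lborel (normal_density 0 s))"

definition spec_norm :: "nat \<Rightarrow> nat \<Rightarrow> (nat \<Rightarrow> nat \<Rightarrow> real) \<Rightarrow> real" where
  "spec_norm n m A = Sup {sqrt (\<Sum>i<n. (\<Sum>j<m. A i j * x j)\<^sup>2) | x.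
                          (\<Sum>j<m. (x j)\<^sup>2) \<le> 1}"

definition gauss_matrix_law :: "nat \<Rightarrow> nat \<Rightarrow> (nat \<Rightarrow> real) \<Rightarrow> (nat \<times> nat \<Rightarrow> real) measure" where
  "gauss_matrix_law p1 p2 \<sigma> = (\<Pi>\<^sub>M ij \<in> {..<p1} \<times> {..<p2}. gauss (\<sigma> (fst ij)))"

definition gram :: "nat \<Rightarrow> (nat \<times> nat \<Rightarrow> real) \<Rightarrow> nat \<Rightarrow> nat \<Rightarrow> real" where
  "gram p2 Z i k = (\<Sum>j<p2. Z (i, j) * Z (k, j))"

end

theory Submission
  imports Defs
begin

text \<open>Write A = Z Z^T - E Z Z^T, S = sum_i sigma_i^2 and m = max_i sigma_i = sigma_k.
  Testing the quadratic form of A on the normalised first column z of Z gives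
  norm A >= |z|^2 - p2 m^2, hence E norm A >= S - p2 m^2.  Testing the k-th column of A against
  the unit vector sigma / sqrt S gives norm A >= sum_i sigma_i |A_ik| / sqrt S.  Each A_ik is a sum
  of p2 independent centred products of Gaussians whose fourth moment is at most 18 times the
  square of its second moment, so E |A_ik| >= sqrt p2 sigma_i sigma_k / 6 and therefore
  E norm A >= sqrt (p2 S) m / 6.  Whichever of S and sqrt (p2 S) m dominates, one of the two
  bounds yields E norm A >= (S + sqrt (p2 S) m) / 16.\<close>

section \<open>Spectral norm\<close>

lemma spec_norm_eq_Sup_L2_set:
  "spec_norm n m A = Sup {L2_set (\<lambda>i. \<Sum>j<m. A i j * x j) {..<n} | x. (\<Sum>j<m. (x j)\<^sup>2) \<le> 1}"
  unfolding spec_norm_def L2_set_def by simp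

lemma L2_set_matrix_vector_le_sum_abs:
  fixes A :: "nat \<Rightarrow> nat \<Rightarrow> real"
  assumes "(\<Sum>j<m. (x j)\<^sup>2) \<le> 1"
  shows "L2_set (\<lambda>i. \<Sum>j<m. A i j * x j) {..<n} \<le> (\<Sum>i<n. \<Sum>j<m. \<bar>A i j\<bar>)"
proof -
  have x_le_1: "\<bar>x j\<bar> \<le> 1" if "j < m" for j
  proof -
    have "(x j)\<^sup>2 \<le> (\<Sum>j<m. (x j)\<^sup>2)"
      using that by (intro member_le_sum) auto
    then have "(x j)\<^sup>2 \<le> 1" using assms by linarith
    then show ?thesis by (simp add: abs_square_le_1)
  qed
  have "L2_set (\<lambda>i. \<Sum>j<m. A i j * x j) {..<n} \<le> (\<Sum>i<n. \<bar>\<Sum>j<m. A i j * x j\<bar>)"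
    by (rule L2_set_le_sum_abs)
  also have "\<dots> \<le> (\<Sum>i<n. \<Sum>j<m. \<bar>A i j\<bar>)"
  proof (intro sum_mono)
    fix i
    have "\<bar>\<Sum>j<m. A i j * x j\<bar> \<le> (\<Sum>j<m. \<bar>A i j * x j\<bar>)"
      by (rule sum_abs)
    also have "\<dots> \<le> (\<Sum>j<m. \<bar>A i j\<bar>)"
      by (intro sum_mono) (auto simp: abs_mult intro: mult_left_le[OF x_le_1])
    finally show "\<bar>\<Sum>j<m. A i j * x j\<bar> \<le> (\<Sum>j<m. \<bar>A i j\<bar>)" .
  qed
  finally show ?thesis .
qed

lemma L2_set_matrix_vector_le_spec_norm:
  fixes A :: "nat \<Rightarrow> nat \<Rightarrow> real"
  assumes "(\<Sum>j<m. (x j)\<^sup>2) \<le> 1"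
  shows "L2_set (\<lambda>i. \<Sum>j<m. A i j * x j) {..<n} \<le> spec_norm n m A"
  unfolding spec_norm_eq_Sup_L2_set
proof (rule cSup_upper)
  show "bdd_above {L2_set (\<lambda>i. \<Sum>j<m. A i j * x j) {..<n} | x. (\<Sum>j<m. (x j)\<^sup>2) \<le> 1}"
    using L2_set_matrix_vector_le_sum_abs[where A=A and m=m and n=n]
    by (intro bdd_aboveI[where M="\<Sum>i<n. \<Sum>j<m. \<bar>A i j\<bar>"]) blast
qed (use assms in auto)

lemma spec_norm_leI:
  fixes A :: "nat \<Rightarrow> nat \<Rightarrow> real"
  assumes "\<And>x. (\<Sum>j<m. (x j)\<^sup>2) \<le> 1 \<Longrightarrow> L2_set (\<lambda>i. \<Sum>j<m. A i j * x j) {..<n} \<le> b"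
  shows "spec_norm n m A \<le> b"
  unfolding spec_norm_eq_Sup_L2_set using assms by (intro cSup_least) (auto intro!: exI[of _ "\<lambda>_. 0"])

lemma spec_norm_nonneg: "0 \<le> spec_norm n m A"
  using L2_set_matrix_vector_le_spec_norm[where x="\<lambda>_. 0" and m=m and A=A and n=n] by (simp add: L2_set_0')

lemma spec_norm_le_sum_abs: "spec_norm n m A \<le> (\<Sum>i<n. \<Sum>j<m. \<bar>A i j\<bar>)"
  by (intro spec_norm_leI L2_set_matrix_vector_le_sum_abs)

lemma spec_norm_le_add_sum_abs_diff:
  "spec_norm n m A \<le> spec_norm n m B + (\<Sum>i<n. \<Sum>j<m. \<bar>A i j - B i j\<bar>)"
proof (rule spec_norm_leI)
  fix x :: "nat \<Rightarrow> real" assume x: "(\<Sum>j<m. (x j)\<^sup>2) \<le> 1"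
  have "(\<lambda>i. \<Sum>j<m. A i j * x j) = (\<lambda>i. (\<Sum>j<m. B i j * x j) + (\<Sum>j<m. (A i j - B i j) * x j))"
    by (auto simp: fun_eq_iff sum.distrib[symmetric] algebra_simps)
  then have "L2_set (\<lambda>i. \<Sum>j<m. A i j * x j) {..<n}
      \<le> L2_set (\<lambda>i. \<Sum>j<m. B i j * x j) {..<n} + L2_set (\<lambda>i. \<Sum>j<m. (A i j - B i j) * x j) {..<n}"
    by (simp add: L2_set_triangle_ineq)
  also have "\<dots> \<le> spec_norm n m B + (\<Sum>i<n. \<Sum>j<m. \<bar>A i j - B i j\<bar>)"
    by (intro add_mono x L2_set_matrix_vector_le_spec_norm L2_set_matrix_vector_le_sum_abs)
  finally show "L2_set (\<lambda>i. \<Sum>j<m. A i j * x j) {..<n} \<le> \<dots>" .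
qed

lemma spec_norm_cong:
  assumes "\<And>i j. i < n \<Longrightarrow> j < m \<Longrightarrow> A i j = B i j"
  shows "spec_norm n m A = spec_norm n m B"
proof -
  have "(\<Sum>i<n. (\<Sum>j<m. A i j * x j)\<^sup>2) = (\<Sum>i<n. (\<Sum>j<m. B i j * x j)\<^sup>2)" for x
    using assms by (auto intro!: sum.cong)
  then show ?thesis by (simp add: spec_norm_def)
qed

lemma continuous_on_spec_norm:
  "continuous_on UNIV (\<lambda>B :: nat \<times> nat \<Rightarrow> real. spec_norm n m (\<lambda>i j. B (i, j)))"
proof -
  let ?g = "\<lambda>B :: nat \<times> nat \<Rightarrow> real. spec_norm n m (\<lambda>i j. B (i, j))"
  have "(?g \<longlongrightarrow> ?g B0) (at B0)" for B0
  proof -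
    let ?h = "\<lambda>B :: nat \<times> nat \<Rightarrow> real. \<Sum>i<n. \<Sum>j<m. \<bar>B (i, j) - B0 (i, j)\<bar>"
    have "continuous_on UNIV ?h"
      by (intro continuous_intros continuous_on_product_coordinates)
    then have "isCont ?h B0"
      by (simp add: continuous_on_eq_continuous_at)
    then have h0: "(?h \<longlongrightarrow> 0) (at B0)"
      unfolding isCont_def by simp
    have bound: "norm (?g B - ?g B0) \<le> ?h B" for B
      using spec_norm_le_add_sum_abs_diff[of n m "\<lambda>i j. B (i, j)" "\<lambda>i j. B0 (i, j)"]
        spec_norm_le_add_sum_abs_diff[of n m "\<lambda>i j. B0 (i, j)" "\<lambda>i j. B (i, j)"]
      by (simp add: abs_minus_commute)
    have "((\<lambda>B. ?g B - ?g B0) \<longlongrightarrow> 0) (at B0)"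
      by (rule Lim_null_comparison[OF always_eventually h0]) (use bound in blast)
    then show ?thesis
      by (simp add: Lim_null[symmetric])
  qed
  then show ?thesis
    by (simp add: continuous_on_def)
qed

lemma L2_set_column_le_spec_norm:
  fixes A :: "nat \<Rightarrow> nat \<Rightarrow> real"
  assumes k: "k < n"
  shows "L2_set (\<lambda>i. A i k) {..<n} \<le> spec_norm n n A"
proof -
  let ?e = "\<lambda>j. if j = k then 1 else (0::real)"
  have "(\<Sum>j<n. (?e j)\<^sup>2) \<le> 1"
    using k by (simp add: if_distrib[of "\<lambda>x. x\<^sup>2"] cong: if_cong)
  from L2_set_matrix_vector_le_spec_norm[OF this, where n=n and A=A] show ?thesis
    using k by (simp add: if_distrib[of "\<lambda>x. _ * x"] cong: if_cong)
qed

lemma quadratic_form_le_spec_norm: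
  fixes A :: "nat \<Rightarrow> nat \<Rightarrow> real"
  assumes x: "(\<Sum>j<n. (x j)\<^sup>2) \<le> 1"
  shows "(\<Sum>i<n. x i * (\<Sum>j<n. A i j * x j)) \<le> spec_norm n n A"
proof -
  have "(\<Sum>i<n. x i * (\<Sum>j<n. A i j * x j)) \<le> (\<Sum>i<n. \<bar>x i\<bar> * \<bar>\<Sum>j<n. A i j * x j\<bar>)"
    by (intro sum_mono) (simp add: abs_mult[symmetric])
  also have "\<dots> \<le> L2_set x {..<n} * L2_set (\<lambda>i. \<Sum>j<n. A i j * x j) {..<n}"
    by (rule L2_set_mult_ineq)
  also have "\<dots> \<le> 1 * spec_norm n n A"
  proof (rule mult_mono)
    show "L2_set x {..<n} \<le> 1"
      using x by (simp add: L2_set_def)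
  qed (use x L2_set_matrix_vector_le_spec_norm in \<open>auto simp: spec_norm_nonneg\<close>)
  finally show ?thesis by simp
qed

lemma sum_mult_abs_le_L2_set:
  fixes a w :: "nat \<Rightarrow> real"
  assumes "L2_set w {..<n} \<le> 1" and "\<And>i. 0 \<le> w i"
  shows "(\<Sum>i<n. w i * \<bar>a i\<bar>) \<le> L2_set a {..<n}"
proof -
  have "(\<Sum>i<n. w i * \<bar>a i\<bar>) = (\<Sum>i<n. \<bar>w i\<bar> * \<bar>a i\<bar>)"
    using assms(2) by simp
  also have "\<dots> \<le> L2_set w {..<n} * L2_set a {..<n}"
    by (rule L2_set_mult_ineq)
  also have "\<dots> \<le> L2_set a {..<n}"
    using assms(1) by (simp add: mult_left_le_one_le)
  finally show ?thesis .
qed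

lemma gram_quadratic_form:
  "(\<Sum>i<n. x i * (\<Sum>k<n. gram p Z i k * x k)) = (\<Sum>j<p. (\<Sum>i<n. x i * Z (i, j))\<^sup>2)"
proof -
  have "(\<Sum>i<n. x i * (\<Sum>k<n. gram p Z i k * x k))
      = (\<Sum>i<n. \<Sum>k<n. \<Sum>j<p. x i * Z (i, j) * (x k * Z (k, j)))"
    by (simp add: gram_def sum_distrib_left sum_distrib_right mult_ac)
  also have "\<dots> = (\<Sum>j<p. \<Sum>i<n. \<Sum>k<n. x i * Z (i, j) * (x k * Z (k, j)))"
    by (subst sum.swap) (simp add: sum.swap[of _ "{..<n}" "{..<p}"])
  also have "\<dots> = (\<Sum>j<p. (\<Sum>i<n. x i * Z (i, j))\<^sup>2)"
    by (simp add: power2_eq_square sum_product)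
  finally show ?thesis .
qed

lemma quadratic_form_gram_minus_diag:
  "(\<Sum>i<n. x i * (\<Sum>k<n. (gram p Z i k - (if i = k then d i else 0)) * x k))
    = (\<Sum>j<p. (\<Sum>i<n. x i * Z (i, j))\<^sup>2) - (\<Sum>i<n. d i * (x i)\<^sup>2)"
proof -
  have "(\<Sum>k<n. (gram p Z i k - (if i = k then d i else 0)) * x k)
      = (\<Sum>k<n. gram p Z i k * x k) - d i * x i" if "i < n" for i
    using that by (simp add: left_diff_distrib sum_subtractf if_distrib[of "\<lambda>y. y * _"] cong: if_cong)
  then have "(\<Sum>i<n. x i * (\<Sum>k<n. (gram p Z i k - (if i = k then d i else 0)) * x k))
      = (\<Sum>i<n. x i * (\<Sum>k<n. gram p Z i k * x k) - d i * (x i)\<^sup>2)"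
    by (intro sum.cong) (auto simp: right_diff_distrib power2_eq_square mult_ac)
  then show ?thesis
    by (simp add: sum_subtractf gram_quadratic_form)
qed

text \<open>Test the quadratic form against the normalised l-th column of Z; a zero column needs no
  separate treatment because division by 0 yields 0.\<close>
lemma column_norm_sq_le_spec_norm_gram_minus_diag:
  fixes Z :: "nat \<times> nat \<Rightarrow> real"
  assumes l: "l < p" and d: "\<And>i. i < n \<Longrightarrow> d i \<le> D" and "0 \<le> D"
  shows "(\<Sum>i<n. (Z (i, l))\<^sup>2) - D \<le> spec_norm n n (\<lambda>i k. gram p Z i k - (if i = k then d i else 0))"
proof -
  define R where "R = (\<Sum>i<n. (Z (i, l))\<^sup>2)"
  define x where "x i = Z (i, l) / sqrt R" for i
  have "0 \<le> R"
    unfolding R_def by (intro sum_nonneg) simp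
  have x: "(\<Sum>i<n. (x i)\<^sup>2) \<le> 1"
    using \<open>0 \<le> R\<close> unfolding x_def power_divide sum_divide_distrib[symmetric] R_def[symmetric]
    by (cases "R = 0") simp_all
  have "R = (\<Sum>i<n. x i * Z (i, l))\<^sup>2"
    using \<open>0 \<le> R\<close> unfolding x_def times_divide_eq_left sum_divide_distrib[symmetric]
    by (simp add: R_def[symmetric] power2_eq_square[symmetric] power_divide)
      (simp add: power2_eq_square)
  also have "\<dots> \<le> (\<Sum>j<p. (\<Sum>i<n. x i * Z (i, j))\<^sup>2)"
    using l by (intro member_le_sum[where f="\<lambda>j. (\<Sum>i<n. x i * Z (i, j))\<^sup>2"]) auto
  finally have "R - D \<le> (\<Sum>j<p. (\<Sum>i<n. x i * Z (i, j))\<^sup>2) - (\<Sum>i<n. d i * (x i)\<^sup>2)"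
  proof -
    have "(\<Sum>i<n. d i * (x i)\<^sup>2) \<le> (\<Sum>i<n. D * (x i)\<^sup>2)"
      using d by (intro sum_mono mult_right_mono) auto
    also have "\<dots> \<le> D"
      using x \<open>0 \<le> D\<close> by (simp add: sum_distrib_left[symmetric] mult_left_le)
    finally show "R \<le> (\<Sum>j<p. (\<Sum>i<n. x i * Z (i, j))\<^sup>2) \<Longrightarrow> ?thesis"
      by linarith
  qed
  also have "\<dots> \<le> spec_norm n n (\<lambda>i k. gram p Z i k - (if i = k then d i else 0))"
    using quadratic_form_le_spec_norm[OF x, of "\<lambda>i k. gram p Z i k - (if i = k then d i else 0)"]
    by (simp only: quadratic_form_gram_minus_diag)
  finally show ?thesis
    by (simp add: R_def)
qed

section \<open>Moments of centred Gaussians\<close>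

lemma sets_gauss [simp, measurable_cong]: "sets (gauss s) = sets borel"
  by (simp add: gauss_def)

lemma space_gauss [simp]: "space (gauss s) = UNIV"
  by (simp add: gauss_def)

lemma gauss_eq_density_abs: "s \<noteq> 0 \<Longrightarrow> gauss s = density lborel (normal_density 0 \<bar>s\<bar>)"
  by (simp add: gauss_def normal_density_def)

lemma prob_space_gauss: "prob_space (gauss s)"
proof (cases "s = 0")
  case True
  then show ?thesis by (simp add: gauss_def prob_space_return)
next
  case False
  then show ?thesis
    unfolding gauss_eq_density_abs[OF False] by (intro prob_space_normal_density) simp
qed

lemma measure_gauss_UNIV [simp]: "measure (gauss s) UNIV = 1"
  using prob_space.prob_space[OF prob_space_gauss[of s]] by simp

text \<open>The moments of N(0, s^2): s^n (n-1)!! for even n, and 0 for odd n.\<close>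
definition gauss_moment :: "real \<Rightarrow> nat \<Rightarrow> real" where
  "gauss_moment s n = (if even n then s ^ n * fact n / (2 ^ (n div 2) * fact (n div 2)) else 0)"

lemma gauss_moment_numeral [simp]:
  "gauss_moment s 0 = 1" "gauss_moment s 1 = 0" "gauss_moment s 2 = s\<^sup>2" "gauss_moment s 3 = 0"
  "gauss_moment s 4 = 3 * s ^ 4" "gauss_moment s 5 = 0" "gauss_moment s 6 = 15 * s ^ 6"
  "gauss_moment s 7 = 0" "gauss_moment s 8 = 105 * s ^ 8"
  by (simp_all add: gauss_moment_def fact_numeral)

lemma integrable_gauss_power: "integrable (gauss s) (\<lambda>z. z ^ n)"
  and integral_gauss_power: "(\<integral>z. z ^ n \<partial>gauss s) = gauss_moment \<bar>s\<bar> n"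
proof -
  have "integrable (gauss s) (\<lambda>z. z ^ n) \<and> (\<integral>z. z ^ n \<partial>gauss s) = gauss_moment \<bar>s\<bar> n"
  proof (cases "s = 0")
    case True
    then show ?thesis
      by (cases n) (auto simp: gauss_def gauss_moment_def integrable_iff_bounded nn_integral_return
          integral_return measure_return)
  next
    case False
    let ?t = "\<bar>s\<bar>"
    have t: "0 < ?t" using False by simp
    have "integrable lborel (\<lambda>x. normal_density 0 ?t x * x ^ n)"
      using integrable_normal_moment[OF t, of 0 n] by simp
    then have "integrable (gauss s) (\<lambda>z. z ^ n)"
      unfolding gauss_eq_density_abs[OF False] by (subst integrable_density) auto
    moreover have "(\<integral>z. z ^ n \<partial>gauss s) = (\<integral>x. normal_density 0 ?t x * x ^ n \<partial>lborel)"
      unfolding gauss_eq_density_abs[OF False] by (subst integral_density) auto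
    moreover have "(\<integral>x. normal_density 0 ?t x * x ^ n \<partial>lborel) = gauss_moment ?t n"
    proof (cases "even n")
      case True
      then obtain k where n: "n = 2 * k" by (auto elim: evenE)
      have "(\<integral>x. normal_density 0 ?t x * x ^ n \<partial>lborel) = fact (2 * k) / ((2 / ?t\<^sup>2) ^ k * fact k)"
        using integral_normal_moment_even[OF t, of 0 k] by (simp add: n)
      also have "\<dots> = gauss_moment ?t n"
        using t by (simp add: gauss_moment_def n power_mult power_divide field_simps power_even_abs
            flip: power_mult_distrib power_mult)
      finally show ?thesis .
    next
      case False
      then obtain k where n: "n = 2 * k + 1" by (auto elim: oddE)
      show ?thesis
        using integral_normal_moment_odd[OF t, of 0 k] False by (simp add: n gauss_moment_def)
    qed
    ultimately show ?thesis by simp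
  qed
  then show "integrable (gauss s) (\<lambda>z. z ^ n)" "(\<integral>z. z ^ n \<partial>gauss s) = gauss_moment \<bar>s\<bar> n"
    by simp_all
qed

lemma integrable_gauss_square_diff_power: "integrable (gauss s) (\<lambda>z. (z\<^sup>2 - c) ^ n)"
proof -
  have "(\<lambda>z. (z\<^sup>2 - c) ^ n) = (\<lambda>z. \<Sum>k\<le>n. of_nat (n choose k) * z ^ (2 * k) * (- c) ^ (n - k))"
    by (simp add: fun_eq_iff binomial_ring[of "_\<^sup>2" "- c", simplified diff_conv_add_uminus[symmetric]]
        power_mult)
  then show ?thesis
    by (simp add: integrable_gauss_power)
qed

lemma gauss_square_centered_moments:
  assumes "0 \<le> s"
  shows "(\<integral>z. z\<^sup>2 - s\<^sup>2 \<partial>gauss s) = 0"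
    and "(\<integral>z. (z\<^sup>2 - s\<^sup>2)\<^sup>2 \<partial>gauss s) = 2 * s ^ 4"
    and "(\<integral>z. (z\<^sup>2 - s\<^sup>2) ^ 4 \<partial>gauss s) = 60 * s ^ 8"
proof -
  interpret prob_space "gauss s" by (rule prob_space_gauss)
  note moments = integrable_gauss_power integral_gauss_power assms
  have square: "(z\<^sup>2 - s\<^sup>2)\<^sup>2 = z ^ 4 - 2 * s\<^sup>2 * z\<^sup>2 + s ^ 4" for z :: real
    by algebra
  have fourth: "(z\<^sup>2 - s\<^sup>2) ^ 4 = z ^ 8 - 4 * s\<^sup>2 * z ^ 6 + 6 * s ^ 4 * z ^ 4 - 4 * s ^ 6 * z\<^sup>2 + s ^ 8"
    for z :: real
    by algebra
  show "(\<integral>z. z\<^sup>2 - s\<^sup>2 \<partial>gauss s) = 0"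
    using moments by simp
  show "(\<integral>z. (z\<^sup>2 - s\<^sup>2)\<^sup>2 \<partial>gauss s) = 2 * s ^ 4"
    unfolding square using moments by simp
  show "(\<integral>z. (z\<^sup>2 - s\<^sup>2) ^ 4 \<partial>gauss s) = 60 * s ^ 8"
    unfolding fourth using moments by simp
qed

section \<open>Moment inequalities\<close>

lemma square_div_minus_fourth_power_le_abs:
  fixes y t :: real
  assumes t: "0 < t"
  shows "y\<^sup>2 / t - y ^ 4 / (4 * t ^ 3) \<le> \<bar>y\<bar>"
proof -
  define r where "r = \<bar>y\<bar> / t"
  have r: "0 \<le> r" and y: "\<bar>y\<bar> = t * r"
    using t by (simp_all add: r_def)
  have "r\<^sup>2 - r ^ 4 / 4 \<le> r"
  proof (cases "r \<le> 1")
    case True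
    then have "r\<^sup>2 \<le> r" using r by (simp add: power2_eq_square mult_right_le_one_le)
    moreover have "0 \<le> r ^ 4" using r by simp
    ultimately show ?thesis by linarith
  next
    case False
    have "0 \<le> (r\<^sup>2 - 2)\<^sup>2" by simp
    then have "r\<^sup>2 - r ^ 4 / 4 \<le> 1" by (simp add: power2_eq_square power4_eq_xxxx algebra_simps)
    then show ?thesis using False by linarith
  qed
  then have "t * (r\<^sup>2 - r ^ 4 / 4) \<le> t * r"
    using t by (intro mult_left_mono) auto
  moreover have "y\<^sup>2 / t - y ^ 4 / (4 * t ^ 3) = t * (r\<^sup>2 - r ^ 4 / 4)"
  proof -
    have "y\<^sup>2 = (t * r)\<^sup>2" "y ^ 4 = (t * r) ^ 4"
      by (metis power2_abs y, metis power_even_abs y even_numeral)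
    then show ?thesis
      using t by (simp add: field_simps power2_eq_square power4_eq_xxxx power3_eq_cube)
  qed
  ultimately show ?thesis using y by linarith
qed

context prob_space
begin

text \<open>Integrate the previous bound with t = 3 sqrt (E Y^2).\<close>
lemma sqrt_second_moment_le_expectation_abs:
  fixes Y :: "'a \<Rightarrow> real"
  assumes [measurable]: "Y \<in> borel_measurable M"
    and int2: "integrable M (\<lambda>\<omega>. Y \<omega> ^ 2)" and int4: "integrable M (\<lambda>\<omega>. Y \<omega> ^ 4)"
    and fourth: "expectation (\<lambda>\<omega>. Y \<omega> ^ 4) \<le> 18 * (expectation (\<lambda>\<omega>. Y \<omega> ^ 2))\<^sup>2"
  shows "sqrt (expectation (\<lambda>\<omega>. Y \<omega> ^ 2)) / 6 \<le> expectation (\<lambda>\<omega>. \<bar>Y \<omega>\<bar>)"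
proof -
  define V where "V = expectation (\<lambda>\<omega>. Y \<omega> ^ 2)"
  define Q where "Q = expectation (\<lambda>\<omega>. Y \<omega> ^ 4)"
  have "0 \<le> V" unfolding V_def by (intro integral_nonneg_AE) auto
  have abs_le: "\<bar>y\<bar> \<le> 1 + y\<^sup>2" for y :: real
  proof (cases "\<bar>y\<bar> \<le> 1")
    case False
    then have "\<bar>y\<bar> * 1 \<le> \<bar>y\<bar> * \<bar>y\<bar>" by (intro mult_left_mono) auto
    then show ?thesis by (simp add: power2_eq_square)
  qed (simp add: add_increasing2)
  have int_abs: "integrable M (\<lambda>\<omega>. \<bar>Y \<omega>\<bar>)"
    by (rule Bochner_Integration.integrable_bound[OF Bochner_Integration.integrable_add[OF integrable_const[of 1] int2]])
      (use abs_le in \<open>auto intro: order.trans[OF _ abs_ge_self]\<close>)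
  show ?thesis
  proof (cases "V = 0")
    case True
    then show ?thesis by (simp add: V_def integral_nonneg_AE)
  next
    case False
    then have "0 < V" using \<open>0 \<le> V\<close> by simp
    define q where "q = sqrt V"
    have q: "0 < q" "V = q * q" using \<open>0 < V\<close> by (simp_all add: q_def)
    have "Q \<le> 18 * V\<^sup>2" using fourth by (simp add: Q_def V_def)
    then have "Q / (4 * (3 * q) ^ 3) \<le> 18 * V\<^sup>2 / (4 * (3 * q) ^ 3)"
      using q by (intro divide_right_mono) auto
    also have "\<dots> = q / 6"
      using q by (simp add: field_simps power2_eq_square power3_eq_cube)
    finally have "q / 6 \<le> V / (3 * q) - Q / (4 * (3 * q) ^ 3)"
      using q by (simp add: field_simps)
    also have "\<dots> = expectation (\<lambda>\<omega>. (Y \<omega>)\<^sup>2 / (3 * q) - Y \<omega> ^ 4 / (4 * (3 * q) ^ 3))"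
      by (simp add: V_def Q_def int2 int4)
    also have "\<dots> \<le> expectation (\<lambda>\<omega>. \<bar>Y \<omega>\<bar>)"
      using q by (intro integral_mono int_abs Bochner_Integration.integrable_diff integrable_divide
          int2 int4 square_div_minus_fourth_power_le_abs) auto
    finally show ?thesis by (simp add: q_def V_def)
  qed
qed

lemma indep_var_add_moments:
  fixes X S :: "'a \<Rightarrow> real"
  assumes indep: "indep_var borel X borel S"
    and int_X: "\<And>n. n \<le> 4 \<Longrightarrow> integrable M (\<lambda>\<omega>. X \<omega> ^ n)"
    and int_S: "\<And>n. n \<le> 4 \<Longrightarrow> integrable M (\<lambda>\<omega>. S \<omega> ^ n)"
    and mean_X: "expectation X = 0" and mean_S: "expectation S = 0"
  shows "\<And>n. n \<le> 4 \<Longrightarrow> integrable M (\<lambda>\<omega>. (X \<omega> + S \<omega>) ^ n)"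
    and "expectation (\<lambda>\<omega>. (X \<omega> + S \<omega>)\<^sup>2) = expectation (\<lambda>\<omega>. X \<omega> ^ 2) + expectation (\<lambda>\<omega>. S \<omega> ^ 2)"
    and "expectation (\<lambda>\<omega>. (X \<omega> + S \<omega>) ^ 4) = expectation (\<lambda>\<omega>. X \<omega> ^ 4)
           + 6 * (expectation (\<lambda>\<omega>. X \<omega> ^ 2) * expectation (\<lambda>\<omega>. S \<omega> ^ 2)) + expectation (\<lambda>\<omega>. S \<omega> ^ 4)"
proof -
  define T where "T a b = (\<lambda>\<omega>. X \<omega> ^ a * S \<omega> ^ b)" for a b
  have T: "integrable M (T a b) \<and>
      expectation (T a b) = expectation (\<lambda>\<omega>. X \<omega> ^ a) * expectation (\<lambda>\<omega>. S \<omega> ^ b)"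
    if "a \<le> 4" "b \<le> 4" for a b
  proof -
    have "indep_var borel ((\<lambda>x. x ^ a) \<circ> X) borel ((\<lambda>x. x ^ b) \<circ> S)"
      by (rule indep_var_compose[OF indep]) auto
    then have "indep_var borel (\<lambda>\<omega>. X \<omega> ^ a) borel (\<lambda>\<omega>. S \<omega> ^ b)"
      by (simp add: comp_def)
    from indep_var_lebesgue_integral[OF this] indep_var_integrable[OF this] show ?thesis
      using int_X int_S that by (simp add: T_def)
  qed
  have binomial: "(\<lambda>\<omega>. (X \<omega> + S \<omega>) ^ n) = (\<lambda>\<omega>. \<Sum>k\<le>n. of_nat (n choose k) * T k (n - k) \<omega>)" for n
    by (simp add: fun_eq_iff binomial_ring T_def mult_ac)
  show "integrable M (\<lambda>\<omega>. (X \<omega> + S \<omega>) ^ n)" if "n \<le> 4" for n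
    unfolding binomial using T that by auto
  have moment: "expectation (\<lambda>\<omega>. (X \<omega> + S \<omega>) ^ n) =
      (\<Sum>k\<le>n. of_nat (n choose k) * (expectation (\<lambda>\<omega>. X \<omega> ^ k) * expectation (\<lambda>\<omega>. S \<omega> ^ (n - k))))"
    if "n \<le> 4" for n
    unfolding binomial using T that by (simp add: Bochner_Integration.integral_sum)
  show "expectation (\<lambda>\<omega>. (X \<omega> + S \<omega>)\<^sup>2) = expectation (\<lambda>\<omega>. X \<omega> ^ 2) + expectation (\<lambda>\<omega>. S \<omega> ^ 2)"
    using moment[of 2] mean_X mean_S by (simp add: prob_space numeral_eq_Suc)
  show "expectation (\<lambda>\<omega>. (X \<omega> + S \<omega>) ^ 4) = expectation (\<lambda>\<omega>. X \<omega> ^ 4)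
      + 6 * (expectation (\<lambda>\<omega>. X \<omega> ^ 2) * expectation (\<lambda>\<omega>. S \<omega> ^ 2)) + expectation (\<lambda>\<omega>. S \<omega> ^ 4)"
    using moment[of 4] mean_X mean_S by (simp add: prob_space numeral_eq_Suc)
qed

lemma indep_vars_sum_moments:
  fixes Y :: "'j \<Rightarrow> 'a \<Rightarrow> real"
  assumes "finite J" and "indep_vars (\<lambda>_. borel) Y J"
    and "\<And>j n. j \<in> J \<Longrightarrow> n \<le> 4 \<Longrightarrow> integrable M (\<lambda>\<omega>. Y j \<omega> ^ n)"
    and "\<And>j. j \<in> J \<Longrightarrow> expectation (Y j) = 0"
  shows "(\<forall>n\<le>4. integrable M (\<lambda>\<omega>. (\<Sum>j\<in>J. Y j \<omega>) ^ n)) \<and>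
         expectation (\<lambda>\<omega>. \<Sum>j\<in>J. Y j \<omega>) = 0 \<and>
         expectation (\<lambda>\<omega>. (\<Sum>j\<in>J. Y j \<omega>)\<^sup>2) = (\<Sum>j\<in>J. expectation (\<lambda>\<omega>. Y j \<omega> ^ 2)) \<and>
         expectation (\<lambda>\<omega>. (\<Sum>j\<in>J. Y j \<omega>) ^ 4) \<le>
           (\<Sum>j\<in>J. expectation (\<lambda>\<omega>. Y j \<omega> ^ 4)) + 3 * (\<Sum>j\<in>J. expectation (\<lambda>\<omega>. Y j \<omega> ^ 2))\<^sup>2"
  using assms
proof (induction J rule: finite_induct)
  case empty
  then show ?case by (auto simp: power_0_left)
next
  case (insert i J)
  have "indep_vars (\<lambda>_. borel) Y J"
    using insert.prems(1) by (rule indep_vars_subset) auto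
  note IH = insert.IH[OF this insert.prems(2,3)]
  define S where "S = (\<lambda>\<omega>. \<Sum>j\<in>J. Y j \<omega>)"
  have indep: "indep_var borel (Y i) borel S"
    unfolding S_def by (rule indep_vars_sum[OF insert.hyps insert.prems(1)])
  have int_Y: "\<And>n. n \<le> 4 \<Longrightarrow> integrable M (\<lambda>\<omega>. Y i \<omega> ^ n)"
    and int_S: "\<And>n. n \<le> 4 \<Longrightarrow> integrable M (\<lambda>\<omega>. S \<omega> ^ n)"
    using insert.prems(2) IH by (simp_all add: S_def)
  have mean_Y: "expectation (Y i) = 0" and mean_S: "expectation S = 0"
    using insert.prems(3) IH by (simp_all add: S_def)
  note moments = indep_var_add_moments[OF indep int_Y int_S mean_Y mean_S, simplified]
  have sum_insert: "(\<Sum>j\<in>insert i J. Y j \<omega>) = Y i \<omega> + S \<omega>" for \<omega>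
    using insert.hyps by (simp add: S_def)
  define v where "v = expectation (\<lambda>\<omega>. Y i \<omega> ^ 2)"
  define V where "V = (\<Sum>j\<in>J. expectation (\<lambda>\<omega>. Y j \<omega> ^ 2))"
  have "0 \<le> v" unfolding v_def by (intro integral_nonneg_AE) auto
  have "expectation (\<lambda>\<omega>. (Y i \<omega> + S \<omega>) ^ 4) \<le>
      expectation (\<lambda>\<omega>. Y i \<omega> ^ 4) + (\<Sum>j\<in>J. expectation (\<lambda>\<omega>. Y j \<omega> ^ 4)) + 3 * (v + V)\<^sup>2"
  proof -
    have "expectation (\<lambda>\<omega>. S \<omega> ^ 4) \<le> (\<Sum>j\<in>J. expectation (\<lambda>\<omega>. Y j \<omega> ^ 4)) + 3 * V\<^sup>2"
      using IH by (simp add: S_def V_def)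
    moreover have "expectation (\<lambda>\<omega>. (Y i \<omega> + S \<omega>) ^ 4) =
        expectation (\<lambda>\<omega>. Y i \<omega> ^ 4) + 6 * (v * V) + expectation (\<lambda>\<omega>. S \<omega> ^ 4)"
      using moments(3) IH by (simp add: v_def V_def S_def)
    moreover have "6 * (v * V) \<le> 3 * (v + V)\<^sup>2 - 3 * V\<^sup>2"
      using \<open>0 \<le> v\<close> by (simp add: power2_eq_square algebra_simps)
    ultimately show ?thesis
      by linarith
  qed
  moreover have "expectation (\<lambda>\<omega>. (Y i \<omega> + S \<omega>)\<^sup>2) = v + V"
    using moments(2) IH by (simp add: S_def v_def V_def)
  moreover have "expectation (\<lambda>\<omega>. Y i \<omega> + S \<omega>) = 0"
    using int_Y[of 1] int_S[of 1] mean_Y mean_S by simp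
  ultimately show ?case
    unfolding sum_insert using moments(1) insert.hyps by (simp add: v_def V_def add.assoc)
qed

end

section \<open>The Gram matrix of independent Gaussian entries\<close>

context product_prob_space
begin

lemma
  fixes f :: "'i \<Rightarrow> 'a \<Rightarrow> real"
  assumes I: "finite I" and J: "J \<subseteq> I" and f: "\<And>i. i \<in> J \<Longrightarrow> integrable (M i) (f i)"
  shows integrable_prod_coordinates: "integrable (Pi\<^sub>M I M) (\<lambda>\<omega>. \<Prod>i\<in>J. f i (\<omega> i))"
    and integral_prod_coordinates:
      "(\<integral>\<omega>. (\<Prod>i\<in>J. f i (\<omega> i)) \<partial>Pi\<^sub>M I M) = (\<Prod>i\<in>J. integral\<^sup>L (M i) (f i))"
proof -
  define F where "F i = (if i \<in> J then f i else (\<lambda>_. 1))" for i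
  have F: "\<And>i. i \<in> I \<Longrightarrow> integrable (M i) (F i)"
    using f by (simp add: F_def)
  have extend: "(\<Prod>i\<in>J. g i) = (\<Prod>i\<in>I. if i \<in> J then g i else 1)" for g :: "'i \<Rightarrow> real"
    using I J by (simp add: prod.If_cases Int_absorb1)
  have "(\<lambda>\<omega>. \<Prod>i\<in>J. f i (\<omega> i)) = (\<lambda>\<omega>. \<Prod>i\<in>I. F i (\<omega> i))"
    by (simp add: extend F_def if_distrib[of "\<lambda>g. g _"] cong: if_cong)
  moreover have "(\<Prod>i\<in>J. integral\<^sup>L (M i) (f i)) = (\<Prod>i\<in>I. integral\<^sup>L (M i) (F i))"
    by (simp add: extend F_def if_distrib[of "integral\<^sup>L _"] M.prob_space cong: if_cong)
  ultimately show "integrable (Pi\<^sub>M I M) (\<lambda>\<omega>. \<Prod>i\<in>J. f i (\<omega> i))"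
    and "(\<integral>\<omega>. (\<Prod>i\<in>J. f i (\<omega> i)) \<partial>Pi\<^sub>M I M) = (\<Prod>i\<in>J. integral\<^sup>L (M i) (f i))"
    using product_integrable_prod[OF I F] product_integral_prod[OF I F] by simp_all
qed

lemma indep_vars_coordinates:
  assumes "I \<noteq> {}"
  shows "P.indep_vars M (\<lambda>i \<omega>. \<omega> i) I"
proof -
  have "distr (Pi\<^sub>M I M) (Pi\<^sub>M I M) (\<lambda>\<omega>. \<lambda>i\<in>I. \<omega> i) = distr (Pi\<^sub>M I M) (Pi\<^sub>M I M) (\<lambda>\<omega>. \<omega>)"
    by (rule distr_cong) (auto simp: space_PiM)
  also have "\<dots> = Pi\<^sub>M I (\<lambda>i. distr (Pi\<^sub>M I M) (M i) (\<lambda>\<omega>. \<omega> i))"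
    by (simp add: distr_PiM_component prob_space cong: PiM_cong)
  finally show ?thesis
    by (subst P.indep_vars_iff_distr_eq_PiM'[OF assms]) auto
qed

end

locale gaussian_matrix =
  fixes p1 p2 :: nat and \<sigma> :: "nat \<Rightarrow> real"
  assumes p1: "1 \<le> p1" and p2: "1 \<le> p2" and nonneg: "\<And>i. i < p1 \<Longrightarrow> 0 \<le> \<sigma> i"
begin

abbreviation cells :: "(nat \<times> nat) set" where
  "cells \<equiv> {..<p1} \<times> {..<p2}"

abbreviation entry_law :: "nat \<times> nat \<Rightarrow> real measure" where
  "entry_law ij \<equiv> gauss (\<sigma> (fst ij))"

sublocale product_prob_space entry_law cells
  by (intro product_prob_spaceI prob_space_gauss)

abbreviation law :: "(nat \<times> nat \<Rightarrow> real) measure" where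
  "law \<equiv> Pi\<^sub>M cells entry_law"

lemma gauss_matrix_law_eq: "gauss_matrix_law p1 p2 \<sigma> = law"
  by (simp add: gauss_matrix_law_def)

lemma measurable_coordinate [measurable]: "(\<lambda>Z. Z ij) \<in> borel_measurable law"
proof -
  have "(\<lambda>Z. Z ij) \<in> measurable law (entry_law ij)"
  proof (cases "ij \<in> cells")
    case True
    then show ?thesis by (rule measurable_component_singleton[where M=entry_law])
  next
    case False
    have "Z ij = undefined" if "Z \<in> space law" for Z
      using that False unfolding space_PiM by (rule PiE_arb)
    then have "(\<lambda>Z. Z ij) \<in> measurable law (entry_law ij) \<longleftrightarrow>
        (\<lambda>_. undefined) \<in> measurable law (entry_law ij)"
      by (rule measurable_cong)
    then show ?thesis
      by simp
  qed
  then show ?thesis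
    unfolding measurable_cong_sets[OF refl sets_gauss] .
qed

lemma
  fixes f :: "real \<Rightarrow> real"
  assumes "ij \<in> cells" and "integrable (entry_law ij) f"
  shows integrable_coordinate: "integrable law (\<lambda>Z. f (Z ij))"
    and integral_coordinate: "(\<integral>Z. f (Z ij) \<partial>law) = integral\<^sup>L (entry_law ij) f"
  using integrable_prod_coordinates[of "{ij}" "\<lambda>_. f"] integral_prod_coordinates[of "{ij}" "\<lambda>_. f"] assms
  by simp_all

lemma
  fixes f g :: "real \<Rightarrow> real"
  assumes "ij \<in> cells" "kl \<in> cells" "ij \<noteq> kl"
    and "integrable (entry_law ij) f" "integrable (entry_law kl) g"
  shows integrable_coordinate_pair: "integrable law (\<lambda>Z. f (Z ij) * g (Z kl))"
    and integral_coordinate_pair: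
      "(\<integral>Z. f (Z ij) * g (Z kl) \<partial>law) = integral\<^sup>L (entry_law ij) f * integral\<^sup>L (entry_law kl) g"
proof -
  let ?f = "\<lambda>x. if x = ij then f else g"
  have "\<And>x. x \<in> {ij, kl} \<Longrightarrow> integrable (entry_law x) (?f x)"
    using assms by auto
  from integrable_prod_coordinates[where J="{ij, kl}", OF _ _ this]
    integral_prod_coordinates[where J="{ij, kl}", OF _ _ this]
  show "integrable law (\<lambda>Z. f (Z ij) * g (Z kl))"
    and "(\<integral>Z. f (Z ij) * g (Z kl) \<partial>law) = integral\<^sup>L (entry_law ij) f * integral\<^sup>L (entry_law kl) g"
    using assms(1-3) by simp_all
qed

text \<open>The j-th summand of the (i,k) entry of Z Z^T - E Z Z^T.\<close>
definition centered_product :: "nat \<Rightarrow> nat \<Rightarrow> nat \<Rightarrow> (nat \<times> nat \<Rightarrow> real) \<Rightarrow> real" where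
  "centered_product i k j Z = (if i = k then (Z (i, j))\<^sup>2 - (\<sigma> i)\<^sup>2 else Z (i, j) * Z (k, j))"

lemma centered_product_moments:
  assumes i: "i < p1" and k: "k < p1" and j: "j < p2"
  shows "\<And>n. integrable law (\<lambda>Z. centered_product i k j Z ^ n)"
    and "P.expectation (centered_product i k j) = 0"
    and "P.expectation (\<lambda>Z. centered_product i k j Z ^ 2) =
           (if i = k then 2 * \<sigma> i ^ 4 else (\<sigma> i)\<^sup>2 * (\<sigma> k)\<^sup>2)"
    and "P.expectation (\<lambda>Z. centered_product i k j Z ^ 4) =
           (if i = k then 60 * \<sigma> i ^ 8 else 9 * \<sigma> i ^ 4 * \<sigma> k ^ 4)"
proof -
  have cells: "(i, j) \<in> cells" "(k, j) \<in> cells" using i j k by auto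
  have "integrable law (\<lambda>Z. centered_product i k j Z ^ n) \<and>
      P.expectation (\<lambda>Z. centered_product i k j Z ^ n) =
        (if i = k then \<integral>z. (z\<^sup>2 - (\<sigma> i)\<^sup>2) ^ n \<partial>gauss (\<sigma> i)
         else gauss_moment (\<sigma> i) n * gauss_moment (\<sigma> k) n)" for n
  proof (cases "i = k")
    case True
    then show ?thesis
      using integrable_coordinate[OF cells(1), of "\<lambda>z. (z\<^sup>2 - (\<sigma> i)\<^sup>2) ^ n"]
        integral_coordinate[OF cells(1), of "\<lambda>z. (z\<^sup>2 - (\<sigma> i)\<^sup>2) ^ n"]
      by (simp add: centered_product_def integrable_gauss_square_diff_power)
  next
    case False
    then show ?thesis
      using integrable_coordinate_pair[OF cells, of "\<lambda>z. z ^ n" "\<lambda>z. z ^ n"]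
        integral_coordinate_pair[OF cells, of "\<lambda>z. z ^ n" "\<lambda>z. z ^ n"] nonneg i k
      by (simp add: centered_product_def power_mult_distrib integrable_gauss_power integral_gauss_power)
  qed
  note moments = this gauss_square_centered_moments[OF nonneg[OF i]]
  show "\<And>n. integrable law (\<lambda>Z. centered_product i k j Z ^ n)"
    using moments by blast
  show "P.expectation (centered_product i k j) = 0"
    using moments(1)[of 1] moments(2) by (simp add: gauss_moment_def split: if_splits)
  show "P.expectation (\<lambda>Z. centered_product i k j Z ^ 2) =
      (if i = k then 2 * \<sigma> i ^ 4 else (\<sigma> i)\<^sup>2 * (\<sigma> k)\<^sup>2)"
    using moments(1)[of 2] moments(3) by (cases "i = k") simp_all
  show "P.expectation (\<lambda>Z. centered_product i k j Z ^ 4) =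
      (if i = k then 60 * \<sigma> i ^ 8 else 9 * \<sigma> i ^ 4 * \<sigma> k ^ 4)"
    using moments(1)[of 4] moments(4) by (cases "i = k") (simp_all add: power_mult_distrib)
qed

text \<open>Different columns of Z involve disjoint sets of independent entries.\<close>
lemma indep_vars_centered_product:
  assumes i: "i < p1" and k: "k < p1"
  shows "P.indep_vars (\<lambda>_. borel) (\<lambda>j. centered_product i k j) {..<p2}"
proof -
  define K :: "nat \<Rightarrow> (nat \<times> nat) set" where "K j = {(i, j), (k, j)}" for j
  have "(0, 0) \<in> cells" using p1 p2 by auto
  then have "cells \<noteq> {}" by blast
  have indep: "P.indep_vars (\<lambda>j. Pi\<^sub>M (K j) entry_law) (\<lambda>j Z. restrict Z (K j)) {..<p2}"
    using P.indep_vars_restrict[OF indep_vars_coordinates[OF \<open>cells \<noteq> {}\<close>], where K=K and L="{..<p2}"] i k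
    by (auto simp: K_def disjoint_family_on_def)
  define Y where "Y j Z = (if i = k then (Z (i, j))\<^sup>2 - (\<sigma> i)\<^sup>2 else Z (i, j) * Z (k, j))"
    for j and Z :: "nat \<times> nat \<Rightarrow> real"
  have "Y j \<in> borel_measurable (Pi\<^sub>M (K j) entry_law)" for j
  proof -
    have "(\<lambda>Z. Z ij) \<in> borel_measurable (Pi\<^sub>M (K j) entry_law)" if "ij \<in> K j" for ij
      using measurable_component_singleton[OF that, of entry_law]
      by (simp add: measurable_cong_sets[OF refl sets_gauss])
    then show ?thesis
      unfolding Y_def by (simp add: K_def)
  qed
  then have "P.indep_vars (\<lambda>_. borel) (\<lambda>j Z. Y j (restrict Z (K j))) {..<p2}"
    by (rule P.indep_vars_compose2[OF indep])
  moreover have "(\<lambda>j Z. Y j (restrict Z (K j))) = (\<lambda>j. centered_product i k j)"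
    by (auto simp: fun_eq_iff Y_def K_def centered_product_def)
  ultimately show ?thesis
    by (simp only:)
qed

definition gram_dev :: "(nat \<times> nat \<Rightarrow> real) \<Rightarrow> nat \<Rightarrow> nat \<Rightarrow> real" where
  "gram_dev Z i k = gram p2 Z i k - (\<integral>Z'. gram p2 Z' i k \<partial>law)"

lemma gram_eq_sum_centered_product:
  assumes "i < p1" "k < p1"
  shows "gram p2 Z i k = (\<Sum>j<p2. centered_product i k j Z + (if i = k then (\<sigma> i)\<^sup>2 else 0))"
  unfolding gram_def by (intro sum.cong) (auto simp: centered_product_def power2_eq_square)

lemma expectation_gram:
  assumes i: "i < p1" and k: "k < p1"
  shows "(\<integral>Z. gram p2 Z i k \<partial>law) = real p2 * (if i = k then (\<sigma> i)\<^sup>2 else 0)"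
proof -
  have "integrable law (centered_product i k j)" "P.expectation (centered_product i k j) = 0"
    if "j < p2" for j
    using centered_product_moments(1)[OF i k that, of 1] centered_product_moments(2)[OF i k that]
    by simp_all
  then show ?thesis
    unfolding gram_eq_sum_centered_product[OF i k]
    by (simp add: Bochner_Integration.integral_sum Bochner_Integration.integral_add P.prob_space)
qed

lemma
  assumes i: "i < p1" and k: "k < p1"
  shows gram_dev_eq_sum_centered_product: "gram_dev Z i k = (\<Sum>j<p2. centered_product i k j Z)"
    and gram_dev_eq_gram_minus_diag:
      "gram_dev Z i k = gram p2 Z i k - (if i = k then real p2 * (\<sigma> i)\<^sup>2 else 0)"
proof -
  show diag: "gram_dev Z i k = gram p2 Z i k - (if i = k then real p2 * (\<sigma> i)\<^sup>2 else 0)"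
    unfolding gram_dev_def expectation_gram[OF i k] by simp
  show "gram_dev Z i k = (\<Sum>j<p2. centered_product i k j Z)"
    unfolding diag gram_eq_sum_centered_product[OF i k] by (simp add: sum.distrib)
qed

lemma gram_dev_moments:
  assumes i: "i < p1" and k: "k < p1"
  defines "v \<equiv> if i = k then 2 * \<sigma> i ^ 4 else (\<sigma> i)\<^sup>2 * (\<sigma> k)\<^sup>2"
  shows "\<And>n. n \<le> 4 \<Longrightarrow> integrable law (\<lambda>Z. gram_dev Z i k ^ n)"
    and "P.expectation (\<lambda>Z. (gram_dev Z i k)\<^sup>2) = real p2 * v"
    and "P.expectation (\<lambda>Z. gram_dev Z i k ^ 4) \<le> 18 * (P.expectation (\<lambda>Z. (gram_dev Z i k)\<^sup>2))\<^sup>2"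
proof -
  note moments = centered_product_moments[OF i k]
  have sums: "(\<forall>n\<le>4. integrable law (\<lambda>Z. (\<Sum>j\<in>{..<p2}. centered_product i k j Z) ^ n)) \<and>
      P.expectation (\<lambda>Z. \<Sum>j\<in>{..<p2}. centered_product i k j Z) = 0 \<and>
      P.expectation (\<lambda>Z. (\<Sum>j\<in>{..<p2}. centered_product i k j Z)\<^sup>2) =
        (\<Sum>j\<in>{..<p2}. P.expectation (\<lambda>Z. centered_product i k j Z ^ 2)) \<and>
      P.expectation (\<lambda>Z. (\<Sum>j\<in>{..<p2}. centered_product i k j Z) ^ 4) \<le>
        (\<Sum>j\<in>{..<p2}. P.expectation (\<lambda>Z. centered_product i k j Z ^ 4)) +
        3 * (\<Sum>j\<in>{..<p2}. P.expectation (\<lambda>Z. centered_product i k j Z ^ 2))\<^sup>2"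
    by (rule P.indep_vars_sum_moments[OF _ indep_vars_centered_product[OF i k]]) (auto intro: moments)
  note gram_dev = gram_dev_eq_sum_centered_product[OF i k]
  show "integrable law (\<lambda>Z. gram_dev Z i k ^ n)" if "n \<le> 4" for n
    using sums that by (simp add: gram_dev)
  show second: "P.expectation (\<lambda>Z. (gram_dev Z i k)\<^sup>2) = real p2 * v"
    using sums moments(3) by (simp add: gram_dev v_def)
  have "(if i = k then 60 * \<sigma> i ^ 8 else 9 * \<sigma> i ^ 4 * \<sigma> k ^ 4) \<le> 15 * v\<^sup>2"
    by (simp add: v_def power_mult_distrib flip: power_mult)
  then have "real p2 * (if i = k then 60 * \<sigma> i ^ 8 else 9 * \<sigma> i ^ 4 * \<sigma> k ^ 4)
      \<le> (real p2)\<^sup>2 * (15 * v\<^sup>2)"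
    using p2 by (intro mult_mono) (auto simp: power2_eq_square)
  then show "P.expectation (\<lambda>Z. gram_dev Z i k ^ 4) \<le> 18 * (P.expectation (\<lambda>Z. (gram_dev Z i k)\<^sup>2))\<^sup>2"
    using sums moments(3,4) unfolding second by (simp add: gram_dev v_def power_mult_distrib)
qed

lemma expectation_abs_gram_dev_ge:
  assumes i: "i < p1" and k: "k < p1"
  shows "sqrt (real p2) * \<sigma> i * \<sigma> k / 6 \<le> P.expectation (\<lambda>Z. \<bar>gram_dev Z i k\<bar>)"
proof -
  note moments = gram_dev_moments[OF i k]
  have "random_variable borel (\<lambda>Z. gram_dev Z i k)"
    using moments(1)[of 1] by (simp add: borel_measurable_integrable)
  from P.sqrt_second_moment_le_expectation_abs[OF this moments(1,1,3)]
  have "sqrt (real p2 * (if i = k then 2 * \<sigma> i ^ 4 else (\<sigma> i)\<^sup>2 * (\<sigma> k)\<^sup>2)) / 6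
      \<le> P.expectation (\<lambda>Z. \<bar>gram_dev Z i k\<bar>)"
    by (simp add: moments(2))
  moreover have "\<sigma> i * \<sigma> k \<le> sqrt (if i = k then 2 * \<sigma> i ^ 4 else (\<sigma> i)\<^sup>2 * (\<sigma> k)\<^sup>2)"
    using nonneg[OF i] nonneg[OF k]
    by (auto simp: real_sqrt_mult power2_eq_square real_le_rsqrt power4_eq_xxxx)
  then have "sqrt (real p2) * \<sigma> i * \<sigma> k
      \<le> sqrt (real p2 * (if i = k then 2 * \<sigma> i ^ 4 else (\<sigma> i)\<^sup>2 * (\<sigma> k)\<^sup>2))"
    unfolding real_sqrt_mult mult.assoc by (intro mult_left_mono) auto
  ultimately show ?thesis
    by (smt (verit, best) divide_right_mono)
qed

lemma integrable_spec_norm_gram_dev: "integrable law (\<lambda>Z. spec_norm p1 p1 (gram_dev Z))"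
proof (rule Bochner_Integration.integrable_bound)
  show "integrable law (\<lambda>Z. \<Sum>i<p1. \<Sum>k<p1. \<bar>gram_dev Z i k\<bar>)"
    using gram_dev_moments(1)[of _ _ 1] by (intro Bochner_Integration.integrable_sum integrable_abs) auto
  have "(\<lambda>Z. \<lambda>(i, k). gram_dev Z i k) \<in> borel_measurable law"
    by (rule measurable_coordinatewise_then_product) (simp add: gram_dev_def gram_def split_beta')
  from measurable_comp[OF this borel_measurable_continuous_onI[OF continuous_on_spec_norm]]
  show "(\<lambda>Z. spec_norm p1 p1 (gram_dev Z)) \<in> borel_measurable law"
    by (simp add: comp_def)
  show "AE Z in law. norm (spec_norm p1 p1 (gram_dev Z)) \<le> norm (\<Sum>i<p1. \<Sum>k<p1. \<bar>gram_dev Z i k\<bar>)"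
    using spec_norm_le_sum_abs spec_norm_nonneg by (intro AE_I2) (simp add: sum_nonneg)
qed

lemma sum_sq_minus_le_expectation_spec_norm_gram_dev:
  assumes m: "\<And>i. i < p1 \<Longrightarrow> \<sigma> i \<le> m"
  shows "(\<Sum>i<p1. (\<sigma> i)\<^sup>2) - real p2 * m\<^sup>2 \<le> P.expectation (\<lambda>Z. spec_norm p1 p1 (gram_dev Z))"
proof -
  have int: "integrable law (\<lambda>Z. (Z (i, 0))\<^sup>2)"
    and exp: "P.expectation (\<lambda>Z. (Z (i, 0))\<^sup>2) = (\<sigma> i)\<^sup>2" if "i < p1" for i
    using that p2 integrable_coordinate[of "(i, 0)" "\<lambda>z. z ^ 2"] integral_coordinate[of "(i, 0)" "\<lambda>z. z ^ 2"]
    by (simp_all add: integrable_gauss_power integral_gauss_power nonneg)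
  have int_sum: "integrable law (\<lambda>Z. \<Sum>i<p1. (Z (i, 0))\<^sup>2)"
    using int by (intro Bochner_Integration.integrable_sum) auto
  have "(\<Sum>i<p1. (Z (i, 0))\<^sup>2) - real p2 * m\<^sup>2 \<le> spec_norm p1 p1 (gram_dev Z)" for Z
  proof -
    have "spec_norm p1 p1 (gram_dev Z) =
        spec_norm p1 p1 (\<lambda>i k. gram p2 Z i k - (if i = k then real p2 * (\<sigma> i)\<^sup>2 else 0))"
      by (intro spec_norm_cong gram_dev_eq_gram_minus_diag)
    moreover have "real p2 * (\<sigma> i)\<^sup>2 \<le> real p2 * m\<^sup>2" if "i < p1" for i
      using m[OF that] nonneg[OF that] by (intro mult_left_mono power_mono) auto
    ultimately show ?thesis
      using column_norm_sq_le_spec_norm_gram_minus_diag[where l=0 and p=p2 and n=p1 and Z=Z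
          and d="\<lambda>i. real p2 * (\<sigma> i)\<^sup>2" and D="real p2 * m\<^sup>2"] p2
      by simp
  qed
  then have "P.expectation (\<lambda>Z. (\<Sum>i<p1. (Z (i, 0))\<^sup>2) - real p2 * m\<^sup>2)
      \<le> P.expectation (\<lambda>Z. spec_norm p1 p1 (gram_dev Z))"
    using int_sum by (intro integral_mono integrable_spec_norm_gram_dev Bochner_Integration.integrable_diff) auto
  moreover have "P.expectation (\<lambda>Z. \<Sum>i<p1. (Z (i, 0))\<^sup>2) = (\<Sum>i<p1. (\<sigma> i)\<^sup>2)"
    using int exp by (simp add: Bochner_Integration.integral_sum)
  ultimately show ?thesis
    using int_sum by (simp add: P.prob_space)
qed

text \<open>Test the k-th column of Z Z^T - E Z Z^T against the unit vector proportional to sigma.\<close>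
lemma sqrt_sum_sq_le_expectation_spec_norm_gram_dev:
  assumes k: "k < p1"
  shows "sqrt (real p2 * (\<Sum>i<p1. (\<sigma> i)\<^sup>2)) * \<sigma> k / 6 \<le> P.expectation (\<lambda>Z. spec_norm p1 p1 (gram_dev Z))"
proof (cases "(\<Sum>i<p1. (\<sigma> i)\<^sup>2) = 0")
  case True
  then show ?thesis
    by (simp add: integral_nonneg_AE spec_norm_nonneg)
next
  case False
  define S where "S = (\<Sum>i<p1. (\<sigma> i)\<^sup>2)"
  have "0 < S"
    using False unfolding S_def by (metis less_eq_real_def sum_nonneg zero_le_power2)
  define w where "w i = \<bar>\<sigma> i\<bar> / sqrt S" for i
  have w: "0 \<le> w i" for i
    using \<open>0 < S\<close> by (simp add: w_def)
  have "L2_set w {..<p1} = sqrt (S / S)"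
    unfolding L2_set_def w_def by (simp add: power_divide sum_divide_distrib[symmetric] S_def sum_nonneg)
  then have "L2_set w {..<p1} \<le> 1"
    using \<open>0 < S\<close> by simp
  note column = sum_mult_abs_le_L2_set[OF this w] L2_set_column_le_spec_norm[OF k]
  have int: "integrable law (\<lambda>Z. \<bar>gram_dev Z i k\<bar>)" if "i < p1" for i
    using gram_dev_moments(1)[OF that k, of 1] by (simp add: integrable_abs)
  have "sqrt (real p2 * S) * \<sigma> k / 6 = S * (sqrt (real p2) * \<sigma> k / (6 * sqrt S))"
    using \<open>0 < S\<close> by (simp add: real_sqrt_mult field_simps)
  also have "\<dots> = (\<Sum>i<p1. (\<sigma> i)\<^sup>2 * (sqrt (real p2) * \<sigma> k / (6 * sqrt S)))"
    by (simp only: S_def sum_distrib_right)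
  also have "\<dots> = (\<Sum>i<p1. w i * (sqrt (real p2) * \<sigma> i * \<sigma> k / 6))"
    using nonneg \<open>0 < S\<close> by (intro sum.cong) (auto simp: w_def power2_eq_square field_simps)
  also have "\<dots> \<le> (\<Sum>i<p1. w i * P.expectation (\<lambda>Z. \<bar>gram_dev Z i k\<bar>))"
    using expectation_abs_gram_dev_ge[OF _ k] w by (intro sum_mono mult_left_mono) auto
  also have "\<dots> = P.expectation (\<lambda>Z. \<Sum>i<p1. w i * \<bar>gram_dev Z i k\<bar>)"
    using int by (simp add: Bochner_Integration.integral_sum)
  also have "\<dots> \<le> P.expectation (\<lambda>Z. spec_norm p1 p1 (gram_dev Z))"
  proof (intro integral_mono integrable_spec_norm_gram_dev)
    show "integrable law (\<lambda>Z. \<Sum>i<p1. w i * \<bar>gram_dev Z i k\<bar>)"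
      using int by auto
    show "(\<Sum>i<p1. w i * \<bar>gram_dev Z i k\<bar>) \<le> spec_norm p1 p1 (gram_dev Z)" for Z
      using column(1)[of "\<lambda>i. gram_dev Z i k"] column(2)[of "gram_dev Z"] by linarith
  qed
  finally show ?thesis
    by (simp add: S_def)
qed

end

lemma lower_bounds_combine:
  fixes S R E p m :: real
  assumes "0 \<le> S" "0 \<le> R" and R: "R\<^sup>2 = p * S * m\<^sup>2"
    and E1: "S - p * m\<^sup>2 \<le> E" and E2: "R / 6 \<le> E"
  shows "(S + R) / 16 \<le> E"
proof (cases "2 * (p * m\<^sup>2) \<le> S")
  case True
  then have "S \<le> 2 * E"
    using E1 by linarith
  then show ?thesis
    using E2 \<open>0 \<le> R\<close> unfolding add_divide_distrib by linarith
next
  case False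
  have "S\<^sup>2 = S * S"
    by (simp add: power2_eq_square)
  also have "\<dots> \<le> S * (2 * (p * m\<^sup>2))"
    using False \<open>0 \<le> S\<close> by (intro mult_left_mono) auto
  also have "\<dots> = 2 * R\<^sup>2"
    unfolding R by (simp add: algebra_simps)
  also have "\<dots> \<le> 9 / 4 * R\<^sup>2"
    using zero_le_power2[of R] by linarith
  also have "\<dots> = (3 / 2 * R)\<^sup>2"
    by (simp add: power2_eq_square)
  finally have "S \<le> 3 / 2 * R"
    by (rule power2_le_imp_le) (use \<open>0 \<le> R\<close> in simp)
  then show ?thesis
    using E2 \<open>0 \<le> R\<close> unfolding add_divide_distrib by linarith
qed

theorem theorem3p5:
  shows "\<exists>c>0. \<forall>(p1::nat) (p2::nat) (\<sigma>::nat \<Rightarrow> real).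
     p1 \<ge> 1 \<longrightarrow> p2 \<ge> 1 \<longrightarrow> (\<forall>i<p1. \<sigma> i \<ge> 0) \<longrightarrow>
     (let M = gauss_matrix_law p1 p2 \<sigma> in
       (\<integral>Z. spec_norm p1 p1 (\<lambda>i k. gram p2 Z i k - (\<integral>Z'. gram p2 Z' i k \<partial>M)) \<partial>M)
       \<ge> c * ((\<Sum>i<p1. (\<sigma> i)\<^sup>2)
               + sqrt (real p2 * (\<Sum>i<p1. (\<sigma> i)\<^sup>2)) * (MAX i\<in>{..<p1}. \<sigma> i)))"
proof (intro exI[of _ "1 / 16"] conjI allI impI)
  fix p1 p2 :: nat and \<sigma> :: "nat \<Rightarrow> real"
  assume "1 \<le> p1" "1 \<le> p2" "\<forall>i<p1. 0 \<le> \<sigma> i"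
  then interpret gaussian_matrix p1 p2 \<sigma>
    by unfold_locales auto
  define S where "S = (\<Sum>i<p1. (\<sigma> i)\<^sup>2)"
  define m where "m = (MAX i\<in>{..<p1}. \<sigma> i)"
  have "m \<in> \<sigma> ` {..<p1}"
    unfolding m_def using p1 by (intro Max_in) (auto simp: lessThan_empty_iff)
  then obtain k where k: "k < p1" "\<sigma> k = m"
    by auto
  have "\<sigma> i \<le> m" if "i < p1" for i
    unfolding m_def using that by (intro Max_ge) auto
  note E1 = sum_sq_minus_le_expectation_spec_norm_gram_dev[OF this]
  note E2 = sqrt_sum_sq_le_expectation_spec_norm_gram_dev[OF k(1)]
  have "(S + sqrt (real p2 * S) * m) / 16 \<le> P.expectation (\<lambda>Z. spec_norm p1 p1 (gram_dev Z))"
    using E1 E2 nonneg[OF k(1)] k(2)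
    by (intro lower_bounds_combine) (auto simp: S_def sum_nonneg power_mult_distrib)
  then show "let M = gauss_matrix_law p1 p2 \<sigma> in
      (\<integral>Z. spec_norm p1 p1 (\<lambda>i k. gram p2 Z i k - (\<integral>Z'. gram p2 Z' i k \<partial>M)) \<partial>M)
      \<ge> 1 / 16 * ((\<Sum>i<p1. (\<sigma> i)\<^sup>2) + sqrt (real p2 * (\<Sum>i<p1. (\<sigma> i)\<^sup>2)) * (MAX i\<in>{..<p1}. \<sigma> i))"
    by (simp add: gauss_matrix_law_eq gram_dev_def[abs_def] S_def m_def)
qed simp

end
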